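(* Let $f:(M,g_M)\to(N,g_N)$ be a conformal Riemannian morphism between Riemannian manifolds whose Riemannian factor $\wedge_f$ is bounded below by a positive number. Define $\rho:M\to\mathbb{Z}$ by $\rho(x)=\mathrm{rank}(df_x)$. Then $\rho$ is locally constant, and hence constant on each connected component of $M$.
   Context: A linear map $T:V\to W$ between real inner-product spaces is a geometric function if there exist a subspace $C\subset V$ with $V=\ker T\oplus C$ and $r>0$ with $\langle T u,T v\rangle=r\langle u,v\rangle$ for all $u,v\in C$ ($r$ is a conformality factor, $C$ a Conf subspace $\mathrm{Conf}(T)$). A smooth $f:(M,g_M)\to(N,g_N)$ is a conformal Riemannian morphism if there is a smooth $\wedge_f:M\to\mathbb{R}^{+}$, called the Riemannian factor, such that each $df_x$ is a geometric function with conformality factor $\wedge_f(x)$. *)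

theory Defs
  imports "HOL-Analysis.Analysis"
begin

coinductive smooth_real :: "(real^'m) set \<Rightarrow> (real^'m \<Rightarrow> real) \<Rightarrow> bool" for S where
  "(\<forall>x\<in>S. g differentiable (at x)) \<Longrightarrow>
   (\<forall>i. smooth_real S (\<lambda>x. frechet_derivative g (at x) (axis i 1))) \<Longrightarrow>
   smooth_real S g"

definition smooth_map :: "(real^'m) set \<Rightarrow> (real^'m \<Rightarrow> real^'n) \<Rightarrow> bool" where
  "smooth_map S F \<longleftrightarrow> (\<forall>j. smooth_real S (\<lambda>x. F x $ j))"

type_synonym ('a, 'm) chart = "'a set \<times> ('a \<Rightarrow> real^'m)"

definition is_chart :: "('a::topological_space, 'm::finite) chart \<Rightarrow> bool" where
  "is_chart c \<longleftrightarrow> (case c of (U, \<phi>) \<Rightarrow>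
      open U \<and> open (\<phi> ` U) \<and> inj_on \<phi> U \<and> continuous_on U \<phi> \<and>
      continuous_on (\<phi> ` U) (inv_into U \<phi>))"

text \<open>A smooth atlas on the whole space (the manifold is the type 'a).\<close>
definition smooth_atlas :: "('a::topological_space, 'm::finite) chart set \<Rightarrow> bool" where
  "smooth_atlas A \<longleftrightarrow>
     (\<forall>c\<in>A. is_chart c) \<and> (\<Union>(fst ` A) = UNIV) \<and>
     (\<forall>(U,\<phi>)\<in>A. \<forall>(V,\<psi>)\<in>A. smooth_map (\<phi> ` (U \<inter> V)) (\<psi> \<circ> inv_into U \<phi>))"

definition gform :: "real^'m^'m \<Rightarrow> real^'m \<Rightarrow> real^'m \<Rightarrow> real" where
  "gform G u v = u \<bullet> (G *v v)"

text \<open>A Riemannian metric is given by its local representation G c p (the Gram matrix of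
  the metric in the chart c at the coordinate point p), smooth, symmetric positive definite,
  and transforming correctly under changes of charts.\<close>
definition riemannian_metric ::
  "('a::topological_space, 'm::finite) chart set \<Rightarrow> (('a, 'm) chart \<Rightarrow> real^'m \<Rightarrow> real^'m^'m) \<Rightarrow> bool" where
  "riemannian_metric A G \<longleftrightarrow>
     smooth_atlas A \<and>
     (\<forall>(U,\<phi>)\<in>A. \<forall>i j. smooth_real (\<phi> ` U) (\<lambda>p. G (U,\<phi>) p $ i $ j)) \<and>
     (\<forall>(U,\<phi>)\<in>A. \<forall>p\<in>\<phi> ` U. transpose (G (U,\<phi>) p) = G (U,\<phi>) p \<and>
                             (\<forall>u. u \<noteq> 0 \<longrightarrow> gform (G (U,\<phi>) p) u u > 0)) \<and>
     (\<forall>(U,\<phi>)\<in>A. \<forall>(V,\<psi>)\<in>A. \<forall>x\<in>U \<inter> V. \<forall>u v.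
        gform (G (U,\<phi>) (\<phi> x)) u v =
        gform (G (V,\<psi>) (\<psi> x))
          (frechet_derivative (\<psi> \<circ> inv_into U \<phi>) (at (\<phi> x)) u)
          (frechet_derivative (\<psi> \<circ> inv_into U \<phi>) (at (\<phi> x)) v))"

definition geometric_function ::
  "(real^'m \<Rightarrow> real^'m \<Rightarrow> real) \<Rightarrow> (real^'n \<Rightarrow> real^'n \<Rightarrow> real) \<Rightarrow>
   (real^'m \<Rightarrow> real^'n) \<Rightarrow> real \<Rightarrow> bool" where
  "geometric_function ipV ipW T r \<longleftrightarrow> linear T \<and>
     (\<exists>C. subspace C \<and> {u. T u = 0} \<inter> C = {0} \<and>
          (\<forall>w. \<exists>k c. T k = 0 \<and> c \<in> C \<and> w = k + c) \<and>
          r > 0 \<and> (\<forall>u\<in>C. \<forall>v\<in>C. ipW (T u) (T v) = r * ipV u v))"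

definition local_rep :: "('a, 'm) chart \<Rightarrow> ('b, 'n) chart \<Rightarrow> ('a \<Rightarrow> 'b) \<Rightarrow> real^'m \<Rightarrow> real^'n" where
  "local_rep c d f = snd d \<circ> f \<circ> inv_into (fst c) (snd c)"

definition dlocal :: "('a, 'm) chart \<Rightarrow> ('b, 'n) chart \<Rightarrow> ('a \<Rightarrow> 'b) \<Rightarrow> 'a \<Rightarrow> real^'m \<Rightarrow> real^'n" where
  "dlocal c d f x = frechet_derivative (local_rep c d f) (at (snd c x))"

definition smooth_mfd_map ::
  "('a::topological_space, 'm::finite) chart set \<Rightarrow> ('b::topological_space, 'n::finite) chart set \<Rightarrow>
   ('a \<Rightarrow> 'b) \<Rightarrow> bool" where
  "smooth_mfd_map A B f \<longleftrightarrow> continuous_on UNIV f \<and>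
     (\<forall>(U,\<phi>)\<in>A. \<forall>(V,\<psi>)\<in>B.
        smooth_map (\<phi> ` (U \<inter> f -` V)) (local_rep (U,\<phi>) (V,\<psi>) f))"

definition smooth_mfd_fun :: "('a::topological_space, 'm::finite) chart set \<Rightarrow> ('a \<Rightarrow> real) \<Rightarrow> bool" where
  "smooth_mfd_fun A h \<longleftrightarrow> (\<forall>(U,\<phi>)\<in>A. smooth_real (\<phi> ` U) (h \<circ> inv_into U \<phi>))"

definition conformal_riemannian_morphism ::
  "('a::topological_space, 'm::finite) chart set \<Rightarrow> (('a, 'm) chart \<Rightarrow> real^'m \<Rightarrow> real^'m^'m) \<Rightarrow>
   ('b::topological_space, 'n::finite) chart set \<Rightarrow> (('b, 'n) chart \<Rightarrow> real^'n \<Rightarrow> real^'n^'n) \<Rightarrow>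
   ('a \<Rightarrow> 'b) \<Rightarrow> ('a \<Rightarrow> real) \<Rightarrow> bool" where
  "conformal_riemannian_morphism A G B H f Lam \<longleftrightarrow>
     smooth_mfd_map A B f \<and> smooth_mfd_fun A Lam \<and> (\<forall>x. Lam x > 0) \<and>
     (\<forall>c\<in>A. \<forall>d\<in>B. \<forall>x. x \<in> fst c \<longrightarrow> f x \<in> fst d \<longrightarrow>
        geometric_function (gform (G c (snd c x))) (gform (H d (snd d (f x))))
                           (dlocal c d f x) (Lam x))"

definition rank_df ::
  "('a, 'm::finite) chart set \<Rightarrow> ('b, 'n::finite) chart set \<Rightarrow> ('a \<Rightarrow> 'b) \<Rightarrow> 'a \<Rightarrow> int" where
  "rank_df A B f x =
     (let (c, d) = (SOME (c, d). c \<in> A \<and> d \<in> B \<and> x \<in> fst c \<and> f x \<in> fst d)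
      in int (dim (range (dlocal c d f x))))"

end

theory Submission
  imports Defs
begin

text \<open>Let S be linear with a complement C of its kernel on which h(S u, S u) = r g(u, u), where
  g is bounded below by a |u|^2 and h above by b |w|^2. If a linear T satisfies |T u - S u| <= e |u|
  with b e^2 < r a, then T is still injective on C, so rank T >= rank S. In fixed charts the Gram
  matrices of both metrics and the matrix of df depend continuously on the point, so near x0 this
  applies with S = df_x0 and T = df_y, giving rank df_y >= rank df_x0, and also with S = df_y and
  T = df_x0, giving the reverse inequality. The second application needs the conformality factors
  of the df_y to stay away from 0, which is exactly the lower bound on the Riemannian factor.\<close>

section \<open>Perturbation of conformal linear maps\<close>

lemma norm_matrix_vector_mult_le:
  fixes A :: "real^'n^'m"
  shows "norm (A *v x) \<le> norm A * norm x"
proof -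
  have "(norm (A *v x))\<^sup>2 = (\<Sum>i\<in>UNIV. (A $ i \<bullet> x)\<^sup>2)"
    by (simp add: norm_vec_def L2_set_def matrix_mult_dot sum_nonneg)
  also have "\<dots> \<le> (\<Sum>i\<in>UNIV. (norm (A $ i))\<^sup>2 * (norm x)\<^sup>2)"
    by (intro sum_mono) (metis Cauchy_Schwarz_ineq2 abs_ge_zero power_mono power_mult_distrib power2_abs)
  also have "\<dots> = (norm A * norm x)\<^sup>2"
    by (simp add: norm_vec_def L2_set_def sum_distrib_right power_mult_distrib sum_nonneg)
  finally show ?thesis
    by (rule power2_le_imp_le) simp
qed

lemma abs_gform_le: "\<bar>gform M u v\<bar> \<le> norm M * norm u * norm v"
proof -
  have "\<bar>gform M u v\<bar> \<le> norm u * norm (M *v v)"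
    unfolding gform_def by (rule Cauchy_Schwarz_ineq2)
  also have "\<dots> \<le> norm u * (norm M * norm v)"
    by (intro mult_left_mono norm_matrix_vector_mult_le) simp
  finally show ?thesis by (simp add: mult_ac)
qed

lemma gform_diff: "gform (X - Y) u v = gform X u v - gform Y u v"
  unfolding gform_def by (simp add: matrix_vector_mult_diff_rdistrib inner_diff_right)

lemma gform_scaleR: "gform M (t *\<^sub>R u) (t *\<^sub>R u) = t\<^sup>2 * gform M u u"
  unfolding gform_def by (simp add: matrix_vector_mult_scaleR power2_eq_square)

lemma gform_coercive:
  fixes M :: "real^'m^'m"
  assumes "\<And>u. u \<noteq> 0 \<Longrightarrow> 0 < gform M u u"
  obtains a where "0 < a" "\<And>u. a * (norm u)\<^sup>2 \<le> gform M u u"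
proof -
  have "continuous_on (sphere 0 1) (\<lambda>u::real^'m. gform M u u)"
    unfolding gform_def by (intro continuous_intros linear_continuous_on matrix_vector_mul_bounded_linear)
  moreover have "sphere (0::real^'m) 1 \<noteq> {}"
    using norm_axis_1 by (metis mem_sphere_0 empty_iff)
  ultimately obtain x where x: "x \<in> sphere 0 1" "\<And>y. y \<in> sphere 0 1 \<Longrightarrow> gform M x x \<le> gform M y y"
    using continuous_attains_inf[OF compact_sphere] by blast
  show thesis
  proof
    show "0 < gform M x x" using x(1) by (intro assms) auto
    show "gform M x x * (norm u)\<^sup>2 \<le> gform M u u" for u
    proof (cases "u = 0")
      case False
      then have "gform M x x \<le> gform M ((1 / norm u) *\<^sub>R u) ((1 / norm u) *\<^sub>R u)"
        by (intro x(2)) simp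
      then have "gform M x x \<le> gform M u u / (norm u)\<^sup>2"
        by (simp add: gform_scaleR power_divide)
      then show ?thesis
        using False by (simp add: pos_le_divide_eq)
    qed (simp add: gform_def)
  qed
qed

lemma dim_range_eq_dim_kernel_complement:
  fixes T :: "real^'m \<Rightarrow> real^'n"
  assumes "linear T" "subspace C" "{u. T u = 0} \<inter> C = {0}"
    and "\<forall>w. \<exists>k c. T k = 0 \<and> c \<in> C \<and> w = k + c"
  shows "dim (range T) = dim C"
proof -
  have "range T = T ` C"
  proof
    show "range T \<subseteq> T ` C"
    proof
      fix w assume "w \<in> range T"
      then obtain v where v: "w = T v" by auto
      obtain k c where "T k = 0" "c \<in> C" "v = k + c" using assms(4) by blast
      then show "w \<in> T ` C" using v linear_add[OF assms(1)] by simp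
    qed
  qed auto
  moreover have spanC: "span C = C" using assms(2) by (rule span_eq_iff[THEN iffD2])
  moreover have "inj_on T C"
  proof (rule inj_onI)
    fix u v assume "u \<in> C" "v \<in> C" "T u = T v"
    then have "u - v \<in> {u. T u = 0} \<inter> C"
      using assms(1,2) by (simp add: subspace_diff linear_diff)
    then show "u = v" using assms(3) by auto
  qed
  ultimately show ?thesis using dim_image_eq[OF assms(1), of C] by metis
qed

lemma geometric_function_dim_range_le:
  fixes S T :: "real^'m \<Rightarrow> real^'n"
  assumes geo: "geometric_function ipV ipW S r" and "linear T"
    and lower: "\<And>u. a * (norm u)\<^sup>2 \<le> ipV u u"
    and upper: "\<And>w. ipW w w \<le> b * (norm w)\<^sup>2" and "0 \<le> b"
    and close: "\<And>u. norm (T u - S u) \<le> e * norm u"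
    and small: "b * e\<^sup>2 < r * a"
  shows "dim (range S) \<le> dim (range T)"
proof -
  from geo obtain C where "linear S" "subspace C" "{u. S u = 0} \<inter> C = {0}"
      "\<forall>w. \<exists>k c. S k = 0 \<and> c \<in> C \<and> w = k + c" "0 < r"
      and conf: "\<forall>u\<in>C. \<forall>v\<in>C. ipW (S u) (S v) = r * ipV u v"
    unfolding geometric_function_def by blast
  then have dimC: "dim (range S) = dim C"
    using dim_range_eq_dim_kernel_complement by blast
  have "w = 0" if "w \<in> C" "T w = 0" for w
  proof (rule ccontr)
    assume "w \<noteq> 0"
    have "norm (S w) \<le> e * norm w" using close[of w] \<open>T w = 0\<close> by simp
    then have "(norm (S w))\<^sup>2 \<le> e\<^sup>2 * (norm w)\<^sup>2"
      by (metis norm_ge_zero power_mono power_mult_distrib)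
    have "r * a * (norm w)\<^sup>2 \<le> r * ipV w w"
      using lower[of w] \<open>0 < r\<close> by (simp add: mult.assoc)
    also have "\<dots> = ipW (S w) (S w)" using conf \<open>w \<in> C\<close> by simp
    also have "\<dots> \<le> b * (norm (S w))\<^sup>2" by (rule upper)
    also have "\<dots> \<le> b * e\<^sup>2 * (norm w)\<^sup>2"
      using \<open>(norm (S w))\<^sup>2 \<le> e\<^sup>2 * (norm w)\<^sup>2\<close> \<open>0 \<le> b\<close> by (simp add: mult.assoc mult_left_mono)
    finally show False using small \<open>w \<noteq> 0\<close> by simp
  qed
  then have "inj_on T C"
    using linear_inj_on_iff_eq_0[OF \<open>linear T\<close> \<open>subspace C\<close>] by blast
  moreover have "span C = C" using \<open>subspace C\<close> by (rule span_eq_iff[THEN iffD2])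
  ultimately have "inj_on T (span C)" by metis
  then have "dim (T ` C) = dim C" by (rule dim_image_eq[OF \<open>linear T\<close>])
  moreover have "dim (T ` C) \<le> dim (range T)" by (rule dim_subset) auto
  ultimately show ?thesis using dimC by simp
qed

lemma geometric_function_dim_range_eq_near:
  fixes T T0 :: "real^'m \<Rightarrow> real^'n"
  assumes geo0: "geometric_function (gform G0) (gform H0) T0 r0"
    and geo: "geometric_function (gform G) (gform H) T r"
    and G0_ge: "\<And>u. a * (norm u)\<^sup>2 \<le> gform G0 u u"
    and near_G: "norm (G - G0) \<le> a / 2" and near_H: "norm (H - H0) \<le> 1"
    and small: "(norm H0 + 1) * (norm (matrix T - matrix T0))\<^sup>2 < min (r * (a / 2)) (r0 * a)"
  shows "dim (range T) = dim (range T0)"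
proof -
  define b where "b = norm H0"
  define e where "e = norm (matrix T - matrix T0)"
  have "linear T" "linear T0" using geo geo0 unfolding geometric_function_def by auto
  have close: "norm (T u - T0 u) \<le> e * norm u" for u
  proof -
    have "T u - T0 u = (matrix T - matrix T0) *v u"
      using \<open>linear T\<close> \<open>linear T0\<close> by (simp add: matrix_vector_mult_diff_rdistrib matrix_works)
    then show ?thesis unfolding e_def by (simp add: norm_matrix_vector_mult_le)
  qed
  then have close': "norm (T0 u - T u) \<le> e * norm u" for u by (simp add: norm_minus_commute)
  have H0_le: "gform H0 w w \<le> b * (norm w)\<^sup>2" for w
    using abs_gform_le[of H0 w w] by (simp add: b_def power2_eq_square mult.assoc)
  have G_ge: "a / 2 * (norm u)\<^sup>2 \<le> gform G u u" for u
  proof -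
    have "\<bar>gform (G - G0) u u\<bar> \<le> a / 2 * (norm u)\<^sup>2"
      using abs_gform_le[of "G - G0" u u] mult_right_mono[OF near_G, of "(norm u)\<^sup>2"]
      by (simp add: power2_eq_square mult.assoc)
    then show ?thesis using G0_ge[of u] unfolding gform_diff by linarith
  qed
  have H_le: "gform H w w \<le> (b + 1) * (norm w)\<^sup>2" for w
  proof -
    have "\<bar>gform (H - H0) w w\<bar> \<le> 1 * (norm w)\<^sup>2"
      using abs_gform_le[of "H - H0" w w] mult_right_mono[OF near_H, of "(norm w)\<^sup>2"]
      by (simp add: power2_eq_square mult.assoc)
    then show ?thesis using H0_le[of w] unfolding gform_diff by (simp add: distrib_right)
  qed
  have "b * e\<^sup>2 \<le> (b + 1) * e\<^sup>2" by (simp add: distrib_right)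
  then have "b * e\<^sup>2 < r0 * a" "(b + 1) * e\<^sup>2 < r * (a / 2)"
    using small unfolding b_def e_def by linarith+
  then have "dim (range T0) \<le> dim (range T)" "dim (range T) \<le> dim (range T0)"
    using geometric_function_dim_range_le[OF geo0 \<open>linear T\<close> G0_ge H0_le _ close]
      geometric_function_dim_range_le[OF geo \<open>linear T0\<close> G_ge H_le _ close']
    by (simp_all add: b_def)
  then show ?thesis by simp
qed

lemma eventually_dim_range_eq_geometric_function:
  fixes T :: "'x \<Rightarrow> real^'m \<Rightarrow> real^'n" and T0 :: "real^'m \<Rightarrow> real^'n"
  assumes lim_G: "(G \<longlongrightarrow> G0) F" and lim_H: "(H \<longlongrightarrow> H0) F"
    and lim_T: "((\<lambda>y. matrix (T y)) \<longlongrightarrow> matrix T0) F"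
    and pos_G0: "\<And>u. u \<noteq> 0 \<Longrightarrow> 0 < gform G0 u u"
    and geo0: "geometric_function (gform G0) (gform H0) T0 r0"
    and geo: "\<forall>\<^sub>F y in F. geometric_function (gform (G y)) (gform (H y)) (T y) (r y)"
    and "0 < c" and r_ge: "\<forall>\<^sub>F y in F. c \<le> r y"
  shows "\<forall>\<^sub>F y in F. dim (range (T y)) = dim (range T0)"
proof -
  obtain a where "0 < a" and G0_ge: "\<And>u. a * (norm u)\<^sup>2 \<le> gform G0 u u"
    using gform_coercive pos_G0 by blast
  define m where "m = min (c * (a / 2)) (r0 * a)"
  have "0 < r0" using geo0 unfolding geometric_function_def by auto
  then have "0 < m / (norm H0 + 1)" using \<open>0 < a\<close> \<open>0 < c\<close> by (simp add: m_def add_nonneg_pos)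
  have "\<forall>\<^sub>F y in F. norm (G y - G0) < a / 2"
    using tendsto_norm_zero[OF LIM_zero[OF lim_G]] by (rule order_tendstoD(2)) (simp add: \<open>0 < a\<close>)
  moreover have "\<forall>\<^sub>F y in F. norm (H y - H0) < 1"
    using tendsto_norm_zero[OF LIM_zero[OF lim_H]] by (rule order_tendstoD(2)) simp
  moreover have "((\<lambda>y. (norm (matrix (T y) - matrix T0))\<^sup>2) \<longlongrightarrow> 0) F"
    using tendsto_power[OF tendsto_norm_zero[OF LIM_zero[OF lim_T]], of 2] by simp
  then have "\<forall>\<^sub>F y in F. (norm (matrix (T y) - matrix T0))\<^sup>2 < m / (norm H0 + 1)"
    by (rule order_tendstoD(2)) fact
  ultimately show ?thesis using geo r_ge
  proof eventually_elim
    case (elim y)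
    have "c * (a / 2) \<le> r y * (a / 2)" using elim(5) \<open>0 < a\<close> by simp
    then have "(norm H0 + 1) * (norm (matrix (T y) - matrix T0))\<^sup>2 < min (r y * (a / 2)) (r0 * a)"
      using elim(3) by (simp add: m_def pos_less_divide_eq add_nonneg_pos mult.commute)
    then show ?case
      using geometric_function_dim_range_eq_near[OF geo0 elim(4) G0_ge] elim(1,2) by simp
  qed
qed

section \<open>Smooth maps, charts and metrics in coordinates\<close>

lemma smooth_real_differentiable: "smooth_real S g \<Longrightarrow> x \<in> S \<Longrightarrow> g differentiable (at x)"
  by (blast elim: smooth_real.cases)

lemma smooth_real_partial: "smooth_real S g \<Longrightarrow> smooth_real S (\<lambda>x. frechet_derivative g (at x) (axis i 1))"
  by (blast elim: smooth_real.cases)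

lemma smooth_real_continuous_on: "smooth_real S g \<Longrightarrow> continuous_on S g"
  by (meson continuous_at_imp_continuous_on differentiable_imp_continuous_within smooth_real_differentiable)

lemma smooth_map_differentiable:
  fixes F :: "real^'m \<Rightarrow> real^'n"
  assumes "smooth_map S F" "x \<in> S"
  shows "F differentiable (at x)"
proof -
  have "(\<lambda>z. F z \<bullet> i) differentiable at x" if i: "i \<in> Basis" for i :: "real^'n"
  proof -
    obtain j where j: "i = axis j 1" using i by (auto simp: Basis_vec_def)
    have "(\<lambda>z. F z $ j) differentiable at x"
      using assms unfolding smooth_map_def by (blast intro: smooth_real_differentiable)
    then show ?thesis using j by (simp add: cart_eq_inner_axis)
  qed
  then show ?thesis using differentiable_componentwise_within[of F x UNIV] by simp
qed

lemma frechet_derivative_component: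
  fixes F :: "real^'m \<Rightarrow> real^'n"
  assumes "F differentiable (at x)"
  shows "frechet_derivative F (at x) v $ j = frechet_derivative (\<lambda>z. F z $ j) (at x) v"
proof -
  have "((\<lambda>z. F z $ j) has_derivative (\<lambda>v. frechet_derivative F (at x) v $ j)) (at x)"
    using assms frechet_derivative_works bounded_linear.has_derivative[OF bounded_linear_vec_nth] by blast
  then show ?thesis using frechet_derivative_at by metis
qed

lemma smooth_map_continuous_on_derivative:
  fixes F :: "real^'m \<Rightarrow> real^'n"
  assumes "smooth_map S F"
  shows "continuous_on S (\<lambda>p. matrix (frechet_derivative F (at p)))"
proof -
  have "continuous_on S (\<lambda>p. \<chi> j i. frechet_derivative (\<lambda>z. F z $ j) (at p) (axis i 1))"
    using assms unfolding smooth_map_def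
    by (intro continuous_on_vec_lambda smooth_real_continuous_on smooth_real_partial) blast
  moreover have "(\<chi> j i. frechet_derivative (\<lambda>z. F z $ j) (at p) (axis i 1)) = matrix (frechet_derivative F (at p))"
    if "p \<in> S" for p
    using frechet_derivative_component[OF smooth_map_differentiable[OF assms that]] by (simp add: matrix_def)
  ultimately show ?thesis using continuous_on_eq by (metis (no_types, lifting))
qed

lemma is_chart_open_image:
  assumes "is_chart (U, \<phi>)" "open W" "W \<subseteq> U"
  shows "open (\<phi> ` W)"
proof -
  have ch: "open (\<phi> ` U)" "inj_on \<phi> U" "continuous_on (\<phi> ` U) (inv_into U \<phi>)"
    using assms(1) unfolding is_chart_def by auto
  have "\<phi> ` W = inv_into U \<phi> -` W \<inter> \<phi> ` U"
    using assms(3) ch(2) by (auto simp: inv_into_f_f image_iff)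
  then show ?thesis using ch(1,3) assms(2) continuous_on_open_vimage by metis
qed

lemma smooth_atlas_is_chart: "smooth_atlas A \<Longrightarrow> c \<in> A \<Longrightarrow> is_chart c"
  unfolding smooth_atlas_def by blast

lemma smooth_atlas_cover:
  assumes "smooth_atlas A"
  obtains U \<phi> where "(U, \<phi>) \<in> A" "x \<in> U"
proof -
  have "x \<in> \<Union>(fst ` A)" using assms unfolding smooth_atlas_def by simp
  then obtain c where "c \<in> A" "x \<in> fst c" by blast
  then show thesis using that[of "fst c" "snd c"] by simp
qed

lemma riemannian_metric_compat:
  assumes "riemannian_metric A G" "(U, \<phi>) \<in> A" "(V, \<psi>) \<in> A" "x \<in> U" "x \<in> V"
  shows "gform (G (U, \<phi>) (\<phi> x)) u v =
    gform (G (V, \<psi>) (\<psi> x)) (frechet_derivative (\<psi> \<circ> inv_into U \<phi>) (at (\<phi> x)) u)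
      (frechet_derivative (\<psi> \<circ> inv_into U \<phi>) (at (\<phi> x)) v)"
proof -
  have all: "\<forall>(U, \<phi>)\<in>A. \<forall>(V, \<psi>)\<in>A. \<forall>x\<in>U \<inter> V. \<forall>u v. gform (G (U, \<phi>) (\<phi> x)) u v =
    gform (G (V, \<psi>) (\<psi> x)) (frechet_derivative (\<psi> \<circ> inv_into U \<phi>) (at (\<phi> x)) u)
      (frechet_derivative (\<psi> \<circ> inv_into U \<phi>) (at (\<phi> x)) v)"
    using assms(1) unfolding riemannian_metric_def by blast
  show ?thesis using bspec[OF bspec[OF all assms(2), simplified] assms(3)] assms(4,5) by simp
qed

lemma smooth_atlas_transition:
  assumes "smooth_atlas A" "(U, \<phi>) \<in> A" "(V, \<psi>) \<in> A"
  shows "smooth_map (\<phi> ` (U \<inter> V)) (\<psi> \<circ> inv_into U \<phi>)"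
proof -
  have all: "\<forall>(U, \<phi>)\<in>A. \<forall>(V, \<psi>)\<in>A. smooth_map (\<phi> ` (U \<inter> V)) (\<psi> \<circ> inv_into U \<phi>)"
    using assms(1) unfolding smooth_atlas_def by blast
  show ?thesis using bspec[OF bspec[OF all assms(2), simplified] assms(3)] by simp
qed

lemma smooth_mfd_map_local_rep:
  assumes "smooth_mfd_map A B f" "(U, \<phi>) \<in> A" "(V, \<psi>) \<in> B"
  shows "smooth_map (\<phi> ` (U \<inter> f -` V)) (local_rep (U, \<phi>) (V, \<psi>) f)"
proof -
  have all: "\<forall>(U, \<phi>)\<in>A. \<forall>(V, \<psi>)\<in>B. smooth_map (\<phi> ` (U \<inter> f -` V)) (local_rep (U, \<phi>) (V, \<psi>) f)"
    using assms(1) unfolding smooth_mfd_map_def by blast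
  show ?thesis using bspec[OF bspec[OF all assms(2), simplified] assms(3)] by simp
qed

lemma riemannian_metric_smooth:
  assumes "riemannian_metric A G" "(U, \<phi>) \<in> A"
  shows "smooth_real (\<phi> ` U) (\<lambda>p. G (U, \<phi>) p $ i $ j)"
proof -
  have all: "\<forall>(U, \<phi>)\<in>A. \<forall>i j. smooth_real (\<phi> ` U) (\<lambda>p. G (U, \<phi>) p $ i $ j)"
    using assms(1) unfolding riemannian_metric_def by blast
  show ?thesis using bspec[OF all assms(2)] by simp
qed

lemma riemannian_metric_pos:
  assumes "riemannian_metric A G" "(U, \<phi>) \<in> A" "p \<in> \<phi> ` U" "u \<noteq> 0"
  shows "0 < gform (G (U, \<phi>) p) u u"
proof -
  have all: "\<forall>(U, \<phi>)\<in>A. \<forall>p\<in>\<phi> ` U. \<forall>u. u \<noteq> 0 \<longrightarrow> 0 < gform (G (U, \<phi>) p) u u"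
    using assms(1) unfolding riemannian_metric_def by fast
  show ?thesis using bspec[OF all assms(2)] assms(3,4) by auto
qed

lemma riemannian_metric_continuous_on:
  assumes "riemannian_metric A G" "(U, \<phi>) \<in> A"
  shows "continuous_on (\<phi> ` U) (G (U, \<phi>))"
proof -
  have "continuous_on (\<phi> ` U) (\<lambda>p. \<chi> i j. G (U, \<phi>) p $ i $ j)"
    by (intro continuous_on_vec_lambda smooth_real_continuous_on riemannian_metric_smooth[OF assms])
  then show ?thesis by simp
qed

section \<open>Rank of the differential\<close>

lemma local_rep_change_of_charts:
  assumes "inj_on \<phi> U" "inj_on \<phi>' U'" "inj_on \<psi> V" "z \<in> U" "z \<in> U'" "f z \<in> V"
  shows "local_rep (U', \<phi>') (V', \<psi>') f (\<phi>' z) =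
    ((\<psi>' \<circ> inv_into V \<psi>) \<circ> local_rep (U, \<phi>) (V, \<psi>) f \<circ> (\<phi> \<circ> inv_into U' \<phi>')) (\<phi>' z)"
  using assms by (simp add: local_rep_def)

lemma dlocal_change_of_charts:
  assumes atlas_A: "smooth_atlas A" and atlas_B: "smooth_atlas B" and f: "smooth_mfd_map A B f"
    and charts: "(U, \<phi>) \<in> A" "(U', \<phi>') \<in> A" "(V, \<psi>) \<in> B" "(V', \<psi>') \<in> B"
    and y: "y \<in> U" "y \<in> U'" "f y \<in> V" "f y \<in> V'"
  shows "dlocal (U', \<phi>') (V', \<psi>') f y =
    frechet_derivative (\<psi>' \<circ> inv_into V \<psi>) (at (\<psi> (f y))) \<circ> dlocal (U, \<phi>) (V, \<psi>) f y \<circ>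
    frechet_derivative (\<phi> \<circ> inv_into U' \<phi>') (at (\<phi>' y))"
proof -
  have "is_chart (U, \<phi>)" "is_chart (U', \<phi>')" "is_chart (V, \<psi>)" "is_chart (V', \<psi>')"
    using charts atlas_A atlas_B by (auto intro: smooth_atlas_is_chart)
  then have "open U" "open U'" "open V" "open V'" and inj: "inj_on \<phi> U" "inj_on \<phi>' U'" "inj_on \<psi> V"
    unfolding is_chart_def by auto
  have "continuous_on UNIV f" using f unfolding smooth_mfd_map_def by auto
  define L where "L = local_rep (U, \<phi>) (V, \<psi>) f"
  define tM where "tM = \<phi> \<circ> inv_into U' \<phi>'"
  define tN where "tN = \<psi>' \<circ> inv_into V \<psi>"
  have tM_y: "tM (\<phi>' y) = \<phi> y" and L_y: "L (\<phi> y) = \<psi> (f y)"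
    using inj y by (simp_all add: tM_def L_def local_rep_def)
  have "(tM has_derivative frechet_derivative tM (at (\<phi>' y))) (at (\<phi>' y))"
    unfolding frechet_derivative_works[symmetric] tM_def
    using smooth_map_differentiable[OF smooth_atlas_transition[OF atlas_A charts(2,1)]] y(1,2) by blast
  moreover have "(L has_derivative frechet_derivative L (at (\<phi> y))) (at (tM (\<phi>' y)))"
    unfolding frechet_derivative_works[symmetric] tM_y L_def
    using smooth_map_differentiable[OF smooth_mfd_map_local_rep[OF f charts(1,3)]] y(1,3) by blast
  moreover have "(tN has_derivative frechet_derivative tN (at (\<psi> (f y)))) (at (L (tM (\<phi>' y))))"
    unfolding frechet_derivative_works[symmetric] tM_y L_y tN_def
    using smooth_map_differentiable[OF smooth_atlas_transition[OF atlas_B charts(3,4)]] y(3,4) by blast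
  ultimately have chain: "(tN \<circ> L \<circ> tM has_derivative
      frechet_derivative tN (at (\<psi> (f y))) \<circ> frechet_derivative L (at (\<phi> y)) \<circ>
      frechet_derivative tM (at (\<phi>' y))) (at (\<phi>' y))"
    unfolding comp_assoc by (intro diff_chain_at) (simp_all only: o_def)
  define W where "W = U \<inter> U' \<inter> f -` (V \<inter> V')"
  have "open W"
    unfolding W_def using \<open>open U\<close> \<open>open U'\<close> \<open>open V\<close> \<open>open V'\<close> \<open>continuous_on UNIV f\<close>
    by (intro open_Int open_vimage) auto
  then have "open (\<phi>' ` W)"
    by (rule is_chart_open_image[OF \<open>is_chart (U', \<phi>')\<close>]) (auto simp: W_def)
  moreover have "\<phi>' y \<in> \<phi>' ` W" using y by (simp add: W_def)
  moreover have "(tN \<circ> L \<circ> tM) p = local_rep (U', \<phi>') (V', \<psi>') f p" if "p \<in> \<phi>' ` W" for p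
    using that unfolding tN_def L_def tM_def W_def by (auto simp: local_rep_change_of_charts[OF inj])
  ultimately have "(local_rep (U', \<phi>') (V', \<psi>') f has_derivative
      frechet_derivative tN (at (\<psi> (f y))) \<circ> frechet_derivative L (at (\<phi> y)) \<circ>
      frechet_derivative tM (at (\<phi>' y))) (at (\<phi>' y))"
    using has_derivative_transform_within_open[OF chain] by blast
  then show ?thesis
    unfolding dlocal_def snd_conv tN_def L_def tM_def by (rule frechet_derivative_at[symmetric])
qed

lemma smooth_atlas_transition_derivative_linear:
  assumes "smooth_atlas A" "(U, \<phi>) \<in> A" "(V, \<psi>) \<in> A" "x \<in> U" "x \<in> V"
  shows "linear (frechet_derivative (\<psi> \<circ> inv_into U \<phi>) (at (\<phi> x)))"
  using smooth_map_differentiable[OF smooth_atlas_transition[OF assms(1-3)]] assms(4,5)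
  by (auto intro: has_derivative_linear simp: frechet_derivative_works)

text \<open>The atlas only asks for smooth transition maps; that their differentials are injective
  follows from the compatibility of the metric with the transition maps.\<close>

lemma riemannian_metric_transition_derivative_inj:
  assumes metric: "riemannian_metric A G" and charts: "(U, \<phi>) \<in> A" "(V, \<psi>) \<in> A"
    and x: "x \<in> U" "x \<in> V"
  shows "inj (frechet_derivative (\<psi> \<circ> inv_into U \<phi>) (at (\<phi> x)))"
proof -
  have "smooth_atlas A" using metric unfolding riemannian_metric_def by simp
  have "u = 0" if "frechet_derivative (\<psi> \<circ> inv_into U \<phi>) (at (\<phi> x)) u = 0" for u
  proof (rule ccontr)
    assume "u \<noteq> 0"
    then have "0 < gform (G (U, \<phi>) (\<phi> x)) u u"
      using riemannian_metric_pos[OF metric charts(1)] x(1) by blast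
    moreover have "gform (G (U, \<phi>) (\<phi> x)) u u = 0"
      using riemannian_metric_compat[OF metric charts x, of u u] that by (simp add: gform_def)
    ultimately show False by simp
  qed
  then show ?thesis
    using linear_injective_0[OF smooth_atlas_transition_derivative_linear[OF \<open>smooth_atlas A\<close> charts x]]
    by blast
qed

lemma dim_range_dlocal_change_of_charts:
  assumes metric_A: "riemannian_metric A G" and metric_B: "riemannian_metric B H"
    and f: "smooth_mfd_map A B f"
    and charts: "(U, \<phi>) \<in> A" "(U', \<phi>') \<in> A" "(V, \<psi>) \<in> B" "(V', \<psi>') \<in> B"
    and y: "y \<in> U" "y \<in> U'" "f y \<in> V" "f y \<in> V'"
  shows "dim (range (dlocal (U', \<phi>') (V', \<psi>') f y)) = dim (range (dlocal (U, \<phi>) (V, \<psi>) f y))"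
proof -
  have atlas: "smooth_atlas A" "smooth_atlas B"
    using metric_A metric_B unfolding riemannian_metric_def by auto
  define DM where "DM = frechet_derivative (\<phi> \<circ> inv_into U' \<phi>') (at (\<phi>' y))"
  define DN where "DN = frechet_derivative (\<psi>' \<circ> inv_into V \<psi>) (at (\<psi> (f y)))"
  have "linear DM" "inj DM"
    unfolding DM_def
    by (fact smooth_atlas_transition_derivative_linear[OF atlas(1) charts(2,1) y(2,1)]
        riemannian_metric_transition_derivative_inj[OF metric_A charts(2,1) y(2,1)])+
  then have "surj DM" by (rule linear_injective_imp_surjective) simp
  have "linear DN" "inj DN"
    unfolding DN_def
    by (fact smooth_atlas_transition_derivative_linear[OF atlas(2) charts(3,4) y(3,4)]
        riemannian_metric_transition_derivative_inj[OF metric_B charts(3,4) y(3,4)])+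
  have "dlocal (U', \<phi>') (V', \<psi>') f y = DN \<circ> dlocal (U, \<phi>) (V, \<psi>) f y \<circ> DM"
    unfolding DM_def DN_def by (rule dlocal_change_of_charts[OF atlas f charts y])
  then have "range (dlocal (U', \<phi>') (V', \<psi>') f y) = DN ` range (dlocal (U, \<phi>) (V, \<psi>) f y)"
    using \<open>surj DM\<close> by (simp only: image_comp[symmetric])
  moreover have "inj_on DN (span (range (dlocal (U, \<phi>) (V, \<psi>) f y)))"
    using \<open>inj DN\<close> by (rule inj_on_subset) simp
  ultimately show ?thesis
    using dim_image_eq[OF \<open>linear DN\<close>] by simp
qed

lemma rank_df_eq_dim_range_dlocal:
  assumes "riemannian_metric A G" "riemannian_metric B H" "smooth_mfd_map A B f"
    and "(U, \<phi>) \<in> A" "(V, \<psi>) \<in> B" "y \<in> U" "f y \<in> V"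
  shows "rank_df A B f y = int (dim (range (dlocal (U, \<phi>) (V, \<psi>) f y)))"
proof -
  let ?P = "\<lambda>(c, d). c \<in> A \<and> d \<in> B \<and> y \<in> fst c \<and> f y \<in> fst d"
  obtain c d where chosen: "(SOME cd. ?P cd) = (c, d)" by (cases "SOME cd. ?P cd")
  obtain U' \<phi>' V' \<psi>' where cd: "c = (U', \<phi>')" "d = (V', \<psi>')" by (cases c, cases d)
  have "?P ((U, \<phi>), (V, \<psi>))" using assms(4-7) by simp
  then have "?P (SOME cd. ?P cd)" by (rule someI)
  then have "(U', \<phi>') \<in> A" "(V', \<psi>') \<in> B" "y \<in> U'" "f y \<in> V'"
    unfolding chosen cd by simp_all
  moreover have "rank_df A B f y = int (dim (range (dlocal (U', \<phi>') (V', \<psi>') f y)))"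
    unfolding rank_df_def chosen cd by simp
  ultimately show ?thesis
    using dim_range_dlocal_change_of_charts[OF assms(1-4) _ assms(5) _ assms(6) _ assms(7)] by simp
qed

lemma continuous_on_tendsto_nhds:
  assumes "continuous_on S g" "open S" "x \<in> S"
  shows "(g \<longlongrightarrow> g x) (nhds x)"
proof -
  have "(g \<longlongrightarrow> g x) (at x)"
    using assms by (metis continuous_on_def at_within_open)
  then show ?thesis by (simp add: tendsto_at_iff_tendsto_nhds)
qed

lemma continuous_on_local_data:
  assumes metric_A: "riemannian_metric A G" and metric_B: "riemannian_metric B H"
    and f: "smooth_mfd_map A B f" and charts: "(U, \<phi>) \<in> A" "(V, \<psi>) \<in> B"
  shows "continuous_on (U \<inter> f -` V) (\<lambda>y. G (U, \<phi>) (\<phi> y))"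
    and "continuous_on (U \<inter> f -` V) (\<lambda>y. H (V, \<psi>) (\<psi> (f y)))"
    and "continuous_on (U \<inter> f -` V) (\<lambda>y. matrix (dlocal (U, \<phi>) (V, \<psi>) f y))"
proof -
  have "is_chart (U, \<phi>)" "is_chart (V, \<psi>)"
    using metric_A metric_B charts unfolding riemannian_metric_def by (auto intro: smooth_atlas_is_chart)
  then have "continuous_on (U \<inter> f -` V) \<phi>" "continuous_on (U \<inter> f -` V) (\<lambda>y. \<psi> (f y))"
    using f unfolding is_chart_def smooth_mfd_map_def
    by (auto intro: continuous_on_subset continuous_on_compose2)
  then show "continuous_on (U \<inter> f -` V) (\<lambda>y. G (U, \<phi>) (\<phi> y))"
    and "continuous_on (U \<inter> f -` V) (\<lambda>y. H (V, \<psi>) (\<psi> (f y)))"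
    and "continuous_on (U \<inter> f -` V) (\<lambda>y. matrix (dlocal (U, \<phi>) (V, \<psi>) f y))"
    unfolding dlocal_def snd_conv
    using riemannian_metric_continuous_on[OF metric_A charts(1)] riemannian_metric_continuous_on[OF metric_B charts(2)]
      smooth_map_continuous_on_derivative[OF smooth_mfd_map_local_rep[OF f charts]]
    by (auto elim!: continuous_on_compose2)
qed

lemma rank_df_locally_constant:
  assumes metric_A: "riemannian_metric A G" and metric_B: "riemannian_metric B H"
    and crm: "conformal_riemannian_morphism A G B H f Lam"
    and "0 < c" and Lam_ge: "\<And>x. c \<le> Lam x"
  shows "\<exists>S. open S \<and> x0 \<in> S \<and> (\<forall>y\<in>S. rank_df A B f y = rank_df A B f x0)"
proof -
  have f: "smooth_mfd_map A B f" and "continuous_on UNIV f"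
    and geo: "\<And>c d x. c \<in> A \<Longrightarrow> d \<in> B \<Longrightarrow> x \<in> fst c \<Longrightarrow> f x \<in> fst d \<Longrightarrow>
      geometric_function (gform (G c (snd c x))) (gform (H d (snd d (f x)))) (dlocal c d f x) (Lam x)"
    using crm unfolding conformal_riemannian_morphism_def smooth_mfd_map_def by auto
  have "smooth_atlas A" "smooth_atlas B"
    using metric_A metric_B unfolding riemannian_metric_def by auto
  then obtain U \<phi> V \<psi> where charts: "(U, \<phi>) \<in> A" "(V, \<psi>) \<in> B" and "x0 \<in> U" "f x0 \<in> V"
    by (metis smooth_atlas_cover)
  then have "open U" "open V"
    using \<open>smooth_atlas A\<close> \<open>smooth_atlas B\<close> by (auto dest: smooth_atlas_is_chart simp: is_chart_def)
  define W where "W = U \<inter> f -` V"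
  have "open W" "x0 \<in> W"
    using \<open>open U\<close> \<open>open V\<close> \<open>continuous_on UNIV f\<close> \<open>x0 \<in> U\<close> \<open>f x0 \<in> V\<close>
    by (auto simp: W_def intro!: open_vimage)
  define GW where "GW y = G (U, \<phi>) (\<phi> y)" for y
  define HW where "HW y = H (V, \<psi>) (\<psi> (f y))" for y
  define TW where "TW y = dlocal (U, \<phi>) (V, \<psi>) f y" for y
  have lim: "(GW \<longlongrightarrow> GW x0) (nhds x0)" "(HW \<longlongrightarrow> HW x0) (nhds x0)"
    "((\<lambda>y. matrix (TW y)) \<longlongrightarrow> matrix (TW x0)) (nhds x0)"
    using continuous_on_local_data[OF metric_A metric_B f charts] \<open>open W\<close> \<open>x0 \<in> W\<close>
    unfolding GW_def HW_def TW_def W_def by (auto intro: continuous_on_tendsto_nhds)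
  have geo_W: "geometric_function (gform (GW y)) (gform (HW y)) (TW y) (Lam y)" if "y \<in> W" for y
    using geo[OF charts] that by (simp add: W_def GW_def HW_def TW_def)
  have "\<forall>\<^sub>F y in nhds x0. y \<in> W"
    using \<open>open W\<close> \<open>x0 \<in> W\<close> by (rule eventually_nhds_in_open)
  moreover have "\<forall>\<^sub>F y in nhds x0. dim (range (TW y)) = dim (range (TW x0))"
  proof (rule eventually_dim_range_eq_geometric_function[OF lim _ _ _ \<open>0 < c\<close>])
    show "0 < gform (GW x0) u u" if "u \<noteq> 0" for u
      unfolding GW_def using riemannian_metric_pos[OF metric_A charts(1)] \<open>x0 \<in> U\<close> that by blast
    show "geometric_function (gform (GW x0)) (gform (HW x0)) (TW x0) (Lam x0)"
      using geo_W \<open>x0 \<in> W\<close> .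
    show "\<forall>\<^sub>F y in nhds x0. geometric_function (gform (GW y)) (gform (HW y)) (TW y) (Lam y)"
      using \<open>\<forall>\<^sub>F y in nhds x0. y \<in> W\<close> by (rule eventually_mono) (rule geo_W)
  qed (simp add: Lam_ge always_eventually)
  ultimately have "\<forall>\<^sub>F y in nhds x0. y \<in> W \<and> dim (range (TW y)) = dim (range (TW x0))"
    by (rule eventually_conj)
  then obtain S where "open S" "x0 \<in> S"
    and S: "\<And>y. y \<in> S \<Longrightarrow> y \<in> W \<and> dim (range (TW y)) = dim (range (TW x0))"
    unfolding eventually_nhds by blast
  have "rank_df A B f y = int (dim (range (TW y)))" if "y \<in> W" for y
    using rank_df_eq_dim_range_dlocal[OF metric_A metric_B f charts] that by (simp add: W_def TW_def)
  then show ?thesis using \<open>open S\<close> \<open>x0 \<in> S\<close> S \<open>x0 \<in> W\<close> by metis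
qed

lemma locally_constant_on_connected_component:
  assumes "\<And>x. \<exists>U. open U \<and> x \<in> U \<and> (\<forall>y\<in>U. g y = g x)"
    and "connected_component UNIV x y"
  shows "g y = g x"
proof -
  let ?C = "connected_component_set UNIV x"
  have "g constant_on ?C"
  proof (rule locally_constant_imp_constant[OF connected_connected_component])
    fix a assume "a \<in> ?C"
    obtain U where "open U" "a \<in> U" "\<forall>y\<in>U. g y = g a" using assms(1) by blast
    moreover have "openin (top_of_set ?C) (?C \<inter> U)" using \<open>open U\<close> by (rule openin_open_Int)
    ultimately show "\<exists>T. openin (top_of_set ?C) T \<and> a \<in> T \<and> (\<forall>y\<in>T. g y = g a)"
      using \<open>a \<in> ?C\<close> by blast
  qed
  moreover have "x \<in> ?C" "y \<in> ?C"
    using assms(2) connected_component_refl[of x UNIV] by simp_all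
  ultimately show ?thesis unfolding constant_on_def by metis
qed

theorem mainTheorem7:
  fixes A :: "('a::{t2_space, second_countable_topology}, 'm::finite) chart set"
    and G :: "('a, 'm) chart \<Rightarrow> real^'m \<Rightarrow> real^'m^'m"
    and B :: "('b::{t2_space, second_countable_topology}, 'n::finite) chart set"
    and H :: "('b, 'n) chart \<Rightarrow> real^'n \<Rightarrow> real^'n^'n"
    and f :: "'a \<Rightarrow> 'b" and Lam :: "'a \<Rightarrow> real"
    and \<rho> :: "'a \<Rightarrow> int"
  assumes "riemannian_metric A G" and "riemannian_metric B H"
    and "conformal_riemannian_morphism A G B H f Lam"
    and "\<exists>c>0. \<forall>x. Lam x \<ge> c"
    and "\<rho> = rank_df A B f"
  shows "(\<forall>x. \<exists>U. open U \<and> x \<in> U \<and> (\<forall>y\<in>U. \<rho> y = \<rho> x)) \<and>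
         (\<forall>x y. connected_component UNIV x y \<longrightarrow> \<rho> y = \<rho> x)"
proof -
  obtain c where "0 < c" "\<And>x. c \<le> Lam x" using assms(4) by blast
  then have "\<exists>U. open U \<and> x \<in> U \<and> (\<forall>y\<in>U. \<rho> y = \<rho> x)" for x
    unfolding assms(5) by (rule rank_df_locally_constant[OF assms(1-3)])
  then show ?thesis
    using locally_constant_on_connected_component[of \<rho>] by metis
qed

end
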